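(* For all integers $b,k\ge0$ and $i\in\{1,2,\dots,b-1\}$, $$\sum_{a=0}^{k}\frac{[a+i-1]!\,[b-i+a-1]!}{[a]!\,[a+b]!}=\frac{1}{[i]\,[b-i]}\cdot\frac{[i+k]!\,[b+k-i]!}{[k]!\,[b+k]!},$$ as an identity of rational functions of $q$.
   Context: For an indeterminate (or complex number) $q$ and $m\in\mathbb{Z}$, $[m]=\frac{q^m-q^{-m}}{q-q^{-1}}$ is the quantum integer and $[m]!=[1][2]\cdots[m]$, $[0]!=1$. *)

theory Defs
  imports "HOL-Computational_Algebra.Polynomial" "HOL-Computational_Algebra.Fraction_Field"
begin

definition qint :: "'a::field \<Rightarrow> int \<Rightarrow> 'a" where
  "qint q m = (q powi m - q powi (-m)) / (q - inverse q)"

definition qfact :: "'a::field \<Rightarrow> nat \<Rightarrow> 'a" where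
  "qfact q n = (\<Prod>j=1..n. qint q (int j))"

definition qvar :: "rat poly fract" where
  "qvar = Fract [:0, 1:] 1"

end

theory Submission
  imports Defs
begin

text \<open>The sum telescopes. Write \<open>F k\<close> for the right-hand side with \<open>c = b - i\<close>. Then
  \<open>F (k+1) / F k = [i+k+1][c+k+1] / ([k+1][i+c+k+1]) = 1 + [i][c] / ([k+1][i+c+k+1])\<close>
  by the q-analogue \<open>[x+m][y+m] - [m][x+y+m] = [x][y]\<close> of a polynomial identity,
  so \<open>F (k+1) - F k\<close> is the summand with \<open>a = k+1\<close>, and \<open>F 0\<close> is the summand with \<open>a = 0\<close>.
  Over \<open>\<rat>(q)\<close> no quantum integer \<open>[n]\<close>, \<open>n > 0\<close>, vanishes since \<open>q\<close> is not a root of unity.\<close>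

lemma qint_shift_product_identity:
  fixes q :: "'a::field"
  assumes "q \<noteq> 0"
  shows "qint q (x + m) * qint q (y + m) - qint q m * qint q (x + y + m) = qint q x * qint q y"
proof -
  have powi_add: "q powi u * q powi v = q powi (u + v)" for u v
    using assms by (simp add: power_int_add)
  have "(q powi (x + m) - q powi (- (x + m))) * (q powi (y + m) - q powi (- (y + m)))
      - (q powi m - q powi (- m)) * (q powi (x + y + m) - q powi (- (x + y + m)))
      = (q powi x - q powi (- x)) * (q powi y - q powi (- y))"
    by (simp add: algebra_simps powi_add)
  then show ?thesis
    unfolding qint_def by (simp add: field_simps diff_divide_distrib[symmetric] power2_eq_square)
qed

lemma qint_nonzero:
  fixes q :: "'a::field"
  assumes "q \<noteq> 0" and not_root_of_unity: "\<And>n. n > 0 \<Longrightarrow> q ^ n \<noteq> 1" and "n > 0"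
  shows "qint q (int n) \<noteq> 0"
proof
  assume "qint q (int n) = 0"
  then have "q ^ n - inverse (q ^ n) = 0 \<or> q - inverse q = 0"
    unfolding qint_def by (simp add: power_int_minus)
  then have "q ^ n * q ^ n = 1 \<or> q * q = 1"
    using \<open>q \<noteq> 0\<close> by (auto simp: field_simps)
  then have "q ^ (2 * n) = 1 \<or> q ^ 2 = 1"
    by (simp add: power_add[symmetric] mult_2 power2_eq_square)
  with not_root_of_unity \<open>n > 0\<close> show False by auto
qed

lemma qfact_Suc: "qfact q (Suc n) = qfact q n * qint q (int (Suc n))"
  unfolding qfact_def by (simp add: prod.nat_ivl_Suc' mult.commute)

lemma qfact_nonzero:
  fixes q :: "'a::field"
  assumes "\<And>n. n > 0 \<Longrightarrow> qint q (int n) \<noteq> 0"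
  shows "qfact q n \<noteq> 0"
  unfolding qfact_def using assms by (auto simp: prod_zero_iff)

lemma qvar_power: "qvar ^ n = Fract (monom 1 n) 1"
  unfolding qvar_def by (induction n) (auto simp: monom_Suc mult_ac One_fract_def)

lemma qvar_nonzero: "qvar \<noteq> 0"
  unfolding qvar_def by (simp add: eq_fract Zero_fract_def)

lemma qvar_power_neq_one: "n > 0 \<Longrightarrow> qvar ^ n \<noteq> 1"
  unfolding qvar_power by (simp add: One_fract_def eq_fract monom_eq_1_iff)

lemma qint_qvar_nonzero: "n > 0 \<Longrightarrow> qint qvar (int n) \<noteq> 0"
  by (rule qint_nonzero[OF qvar_nonzero qvar_power_neq_one])

lemma qfact_quotient_Suc:
  fixes q :: "'a::field"
  assumes nz: "\<And>n. n > 0 \<Longrightarrow> qint q (int n) \<noteq> 0"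
  shows "qfact q (Suc (i + k)) * qfact q (Suc (c + k)) / (qfact q (Suc k) * qfact q (Suc (i + c + k)))
       = qfact q (i + k) * qfact q (c + k) / (qfact q k * qfact q (i + c + k))
         * (1 + qint q (int i) * qint q (int c) / (qint q (int (Suc k)) * qint q (int (Suc (i + c + k)))))"
proof -
  have "q \<noteq> 0"
    using nz[of 1] by (auto simp: qint_def)
  have denominator_nonzero: "qint q (int (Suc k)) \<noteq> 0" "qint q (int (Suc (i + c + k))) \<noteq> 0"
    by (rule nz, simp)+
  have "qint q (int (Suc (i + k))) * qint q (int (Suc (c + k)))
      = qint q (int (Suc k)) * qint q (int (Suc (i + c + k))) + qint q (int i) * qint q (int c)"
    using qint_shift_product_identity[OF \<open>q \<noteq> 0\<close>, of "int i" "int (Suc k)" "int c"]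
    by (simp add: algebra_simps)
  then have ratio: "qint q (int (Suc (i + k))) * qint q (int (Suc (c + k)))
      / (qint q (int (Suc k)) * qint q (int (Suc (i + c + k))))
      = 1 + qint q (int i) * qint q (int c) / (qint q (int (Suc k)) * qint q (int (Suc (i + c + k))))"
    using denominator_nonzero by (simp add: add_divide_distrib)
  have "qfact q (Suc (i + k)) * qfact q (Suc (c + k)) / (qfact q (Suc k) * qfact q (Suc (i + c + k)))
      = qfact q (i + k) * qfact q (c + k) / (qfact q k * qfact q (i + c + k))
        * (qint q (int (Suc (i + k))) * qint q (int (Suc (c + k)))
           / (qint q (int (Suc k)) * qint q (int (Suc (i + c + k)))))"
    unfolding qfact_Suc times_divide_times_eq by (simp only: ac_simps)
  then show ?thesis
    unfolding ratio .
qed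

lemma sum_qfact_quotient_telescoping:
  fixes q :: "'a::field"
  assumes nz: "\<And>n. n > 0 \<Longrightarrow> qint q (int n) \<noteq> 0" and "i \<ge> 1" and "c \<ge> 1"
  shows "(\<Sum>a=0..k. qfact q (a + i - 1) * qfact q (a + c - 1) / (qfact q a * qfact q (a + i + c)))
       = 1 / (qint q (int i) * qint q (int c))
         * (qfact q (i + k) * qfact q (c + k) / (qfact q k * qfact q (i + c + k)))"
proof (induction k)
  case 0
  obtain i' c' where "i = Suc i'" "c = Suc c'"
    using \<open>i \<ge> 1\<close> \<open>c \<ge> 1\<close> by (metis One_nat_def Suc_le_D)
  then show ?case
    using nz[of i] nz[of c] qfact_nonzero[OF nz]
    by (simp add: qfact_Suc field_simps del: of_nat_Suc)
next
  case (Suc k)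
  let ?R = "\<lambda>k. qfact q (i + k) * qfact q (c + k) / (qfact q k * qfact q (i + c + k))"
  let ?IC = "qint q (int i) * qint q (int c)"
  let ?XY = "qint q (int (Suc k)) * qint q (int (Suc (i + c + k)))"
  have "?IC \<noteq> 0" "?XY \<noteq> 0"
    using nz \<open>i \<ge> 1\<close> \<open>c \<ge> 1\<close> by (simp_all del: of_nat_Suc)
  have shift: "Suc k + i - 1 = i + k" "Suc k + c - 1 = c + k" "Suc k + i + c = Suc (i + c + k)"
    using \<open>i \<ge> 1\<close> \<open>c \<ge> 1\<close> by auto
  have summand: "qfact q (Suc k + i - 1) * qfact q (Suc k + c - 1)
      / (qfact q (Suc k) * qfact q (Suc k + i + c)) = ?R k / ?XY"
    unfolding shift qfact_Suc[of q k] qfact_Suc[of q "i + c + k"] by (simp add: ac_simps)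
  have "(\<Sum>a=0..Suc k. qfact q (a + i - 1) * qfact q (a + c - 1) / (qfact q a * qfact q (a + i + c)))
      = 1 / ?IC * ?R k + ?R k / ?XY"
    by (simp only: sum.atLeast0_atMost_Suc Suc.IH summand)
  also have "\<dots> = 1 / ?IC * (?R k * (1 + ?IC / ?XY))"
    using \<open>?IC \<noteq> 0\<close> \<open>?XY \<noteq> 0\<close> qfact_nonzero[OF nz] by (simp add: field_simps)
  also have "\<dots> = 1 / ?IC * ?R (Suc k)"
    using qfact_quotient_Suc[OF nz, of i k c] by simp
  finally show ?case .
qed

theorem lemmaA7:
  fixes b k i :: nat
  assumes "1 \<le> i" and "i \<le> b - 1"
  shows "(\<Sum>a=0..k. (qfact qvar (a + i - 1) * qfact qvar (b - i + a - 1))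
                     / (qfact qvar a * qfact qvar (a + b)))
       = 1 / (qint qvar (int i) * qint qvar (int b - int i))
         * ((qfact qvar (i + k) * qfact qvar (b + k - i)) / (qfact qvar k * qfact qvar (b + k)))"
proof -
  define c where "c = b - i"
  have "c \<ge> 1" and b: "b = i + c"
    using assms unfolding c_def by auto
  have reindex: "\<And>a. b - i + a - 1 = a + c - 1" "\<And>a. a + b = a + i + c" "b + k - i = c + k"
    "int b - int i = int c" "qfact qvar (b + k) = qfact qvar (i + c + k)"
    using b by auto
  show ?thesis
    unfolding reindex
    using sum_qfact_quotient_telescoping[where q = qvar, OF qint_qvar_nonzero \<open>1 \<le> i\<close> \<open>c \<ge> 1\<close>, of k] .
qed

end
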